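(* Let $G=(V,E)$ be a finite graph with couplings $J_e>0$. Then the XOR-Ising measure satisfies, for all $\sigma\in\{-1,+1\}^V$, $$\mu^{\mathrm{XOR}}[\sigma]\propto Z_{S(\sigma),2J}.$$
   Context: $S(\sigma)=\{uv\in E\mid\sigma_u=\sigma_v\}$. For $H\subset E$ and couplings $K$, $Z_{H,K}=\sum_{\tau\in\{\pm1\}^V}\exp(\sum_{uv\in H}K_{uv}\tau_u\tau_v)$ is the Ising partition function on the spanning subgraph $(V,H)$; $2J=(2J_e)_e$. The Ising measure on $G$ is $\mu[\tau]\propto\exp(\sum_{uv\in E}J_{uv}\tau_u\tau_v)$, and $\mu^{\mathrm{XOR}}$ is the law of the pointwise product $\tau^1\tau^2$ of two independent samples of $\mu$. *)

theory Defs
  imports Complex_Main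
begin

text \<open>A spin configuration is a function V -> {-1,+1}; outside V it is fixed to 1
  (so configurations are in bijection with {-1,+1}^V).\<close>

definition spins :: "'v set \<Rightarrow> ('v \<Rightarrow> real) set" where
  "spins V = {\<tau>. (\<forall>v\<in>V. \<tau> v = 1 \<or> \<tau> v = -1) \<and> (\<forall>v. v \<notin> V \<longrightarrow> \<tau> v = 1)}"

text \<open>Boltzmann weight exp(sum over uv in H of K_uv tau_u tau_v); for e = {u,v}, tau_u tau_v = prod over e.\<close>
definition ising_weight :: "'v set set \<Rightarrow> ('v set \<Rightarrow> real) \<Rightarrow> ('v \<Rightarrow> real) \<Rightarrow> real" where
  "ising_weight H K \<tau> = exp (\<Sum>e\<in>H. K e * (\<Prod>v\<in>e. \<tau> v))"

definition ising_Z :: "'v set \<Rightarrow> 'v set set \<Rightarrow> ('v set \<Rightarrow> real) \<Rightarrow> real" where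
  "ising_Z V H K = (\<Sum>\<tau>\<in>spins V. ising_weight H K \<tau>)"

definition ising_mu :: "'v set \<Rightarrow> 'v set set \<Rightarrow> ('v set \<Rightarrow> real) \<Rightarrow> ('v \<Rightarrow> real) \<Rightarrow> real" where
  "ising_mu V E J \<tau> = ising_weight E J \<tau> / ising_Z V E J"

definition xor_mu :: "'v set \<Rightarrow> 'v set set \<Rightarrow> ('v set \<Rightarrow> real) \<Rightarrow> ('v \<Rightarrow> real) \<Rightarrow> real" where
  "xor_mu V E J \<sigma> =
     (\<Sum>p\<in>spins V \<times> spins V.
        if (\<lambda>v. fst p v * snd p v) = \<sigma> then ising_mu V E J (fst p) * ising_mu V E J (snd p) else 0)"

definition same_spin_edges :: "'v set set \<Rightarrow> ('v \<Rightarrow> real) \<Rightarrow> 'v set set" where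
  "same_spin_edges E \<sigma> = {e\<in>E. \<forall>u\<in>e. \<forall>v\<in>e. \<sigma> u = \<sigma> v}"

end

theory Submission
  imports Defs
begin

text \<open>The map \<open>(\<tau>, \<tau>') \<mapsto> (\<tau>, \<tau>\<tau>')\<close> is a bijection of pairs of spin configurations, so
  \<open>\<mu>\<^sup>X\<^sup>O\<^sup>R[\<sigma>] = Z\<^sup>-\<^sup>2 \<Sum>\<^sub>\<tau> w(\<tau>) w(\<tau>\<sigma>)\<close> with \<open>w\<close> the Boltzmann weight. On an edge \<open>uv\<close> the two
  exponents add up to \<open>J(uv) \<tau>(u)\<tau>(v) (1 + \<sigma>(u)\<sigma>(v))\<close>, which is \<open>2 J(uv) \<tau>(u)\<tau>(v)\<close> if
  \<open>uv \<in> S(\<sigma>)\<close> and \<open>0\<close> otherwise. Hence \<open>w(\<tau>) w(\<tau>\<sigma>)\<close> is the weight of \<open>\<tau>\<close> on \<open>(V, S(\<sigma>))\<close> with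
  couplings \<open>2J\<close>, and summing over \<open>\<tau>\<close> gives \<open>Z(S(\<sigma>), 2J)\<close>.\<close>

lemma spins_values: "\<tau> \<in> spins V \<Longrightarrow> \<tau> v = 1 \<or> \<tau> v = -1"
  unfolding spins_def by (cases "v \<in> V") auto

lemma one_in_spins: "(\<lambda>_. 1) \<in> spins V"
  unfolding spins_def by auto

lemma finite_spins:
  assumes "finite V"
  shows "finite (spins V)"
proof (rule finite_subset)
  show "spins V \<subseteq> {\<tau>. \<forall>v. (v \<in> V \<longrightarrow> \<tau> v \<in> {1, -1}) \<and> (v \<notin> V \<longrightarrow> \<tau> v = 1)}"
    unfolding spins_def by auto
  show "finite {\<tau>. \<forall>v. (v \<in> V \<longrightarrow> \<tau> v \<in> {1::real, -1}) \<and> (v \<notin> V \<longrightarrow> \<tau> v = 1)}"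
    by (rule finite_set_of_finite_funs) (use assms in auto)
qed

lemma spins_mult:
  assumes "\<tau> \<in> spins V" and "\<sigma> \<in> spins V"
  shows "(\<lambda>v. \<tau> v * \<sigma> v) \<in> spins V"
proof -
  have "\<tau> v * \<sigma> v = 1 \<or> \<tau> v * \<sigma> v = -1" for v
    using spins_values[OF assms(1), of v] spins_values[OF assms(2), of v] by auto
  moreover have "\<tau> v * \<sigma> v = 1" if "v \<notin> V" for v
    using assms that unfolding spins_def by auto
  ultimately show ?thesis
    unfolding spins_def by auto
qed

lemma spins_mult_eq_iff:
  assumes "\<tau> \<in> spins V"
  shows "(\<lambda>v. \<tau> v * \<rho> v) = \<sigma> \<longleftrightarrow> \<rho> = (\<lambda>v. \<tau> v * \<sigma> v)"
proof -
  have "\<tau> v * \<rho> v = \<sigma> v \<longleftrightarrow> \<rho> v = \<tau> v * \<sigma> v" for v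
    using spins_values[OF assms, of v] by auto
  then show ?thesis
    by (auto simp: fun_eq_iff)
qed

lemma ising_Z_pos:
  assumes "finite V"
  shows "ising_Z V H K > 0"
  unfolding ising_Z_def ising_weight_def
  using finite_spins[OF assms] one_in_spins by (intro sum_pos) auto

lemma xor_mu_eq_sum:
  assumes "finite V" and "\<sigma> \<in> spins V"
  shows "xor_mu V E J \<sigma> = (\<Sum>\<tau>\<in>spins V. ising_mu V E J \<tau> * ising_mu V E J (\<lambda>v. \<tau> v * \<sigma> v))"
  unfolding xor_mu_def sum.cartesian_product' fst_conv snd_conv
proof (rule sum.cong)
  fix \<tau> assume \<tau>: "\<tau> \<in> spins V"
  have "(\<Sum>\<rho>\<in>spins V. if (\<lambda>v. \<tau> v * \<rho> v) = \<sigma> then ising_mu V E J \<tau> * ising_mu V E J \<rho> else 0)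
      = (\<Sum>\<rho>\<in>spins V. if \<rho> = (\<lambda>v. \<tau> v * \<sigma> v) then ising_mu V E J \<tau> * ising_mu V E J \<rho> else 0)"
    by (simp only: spins_mult_eq_iff[OF \<tau>])
  also have "\<dots> = ising_mu V E J \<tau> * ising_mu V E J (\<lambda>v. \<tau> v * \<sigma> v)"
    using finite_spins[OF assms(1)] spins_mult[OF \<tau> assms(2)] by (simp add: sum.delta')
  finally show "(\<Sum>\<rho>\<in>spins V. if (\<lambda>v. \<tau> v * \<rho> v) = \<sigma> then ising_mu V E J \<tau> * ising_mu V E J \<rho> else 0)
      = ising_mu V E J \<tau> * ising_mu V E J (\<lambda>v. \<tau> v * \<sigma> v)" .
qed simp

lemma same_spin_edges_subset: "same_spin_edges E \<sigma> \<subseteq> E"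
  unfolding same_spin_edges_def by blast

lemma prod_edge_spins:
  assumes "e \<in> E" and "card e = 2" and "\<sigma> \<in> spins V"
  shows "(\<Prod>v\<in>e. \<sigma> v) = (if e \<in> same_spin_edges E \<sigma> then 1 else -1)"
proof -
  obtain a b where e: "e = {a, b}" "a \<noteq> b"
    using assms(2) by (meson card_2_iff)
  have "\<sigma> a = 1 \<or> \<sigma> a = -1" and "\<sigma> b = 1 \<or> \<sigma> b = -1"
    using spins_values[OF assms(3)] by blast+
  then have "\<sigma> a * \<sigma> b = (if \<sigma> a = \<sigma> b then 1 else -1)"
    by auto
  moreover have "e \<in> same_spin_edges E \<sigma> \<longleftrightarrow> \<sigma> a = \<sigma> b"
    using assms(1) e unfolding same_spin_edges_def by auto
  ultimately show ?thesis
    using e by simp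
qed

lemma ising_weight_mult_flip:
  assumes "finite E" and "\<forall>e\<in>E. card e = 2" and "\<sigma> \<in> spins V"
  shows "ising_weight E J \<tau> * ising_weight E J (\<lambda>v. \<tau> v * \<sigma> v)
       = ising_weight (same_spin_edges E \<sigma>) (\<lambda>e. 2 * J e) \<tau>"
proof -
  have edge_exponent: "J e * (\<Prod>v\<in>e. \<tau> v) + J e * (\<Prod>v\<in>e. \<tau> v * \<sigma> v)
      = (if e \<in> same_spin_edges E \<sigma> then 2 * J e * (\<Prod>v\<in>e. \<tau> v) else 0)" if "e \<in> E" for e
    using prod_edge_spins[OF that _ assms(3)] assms(2) that by (simp add: prod.distrib)
  have "(\<Sum>e\<in>E. J e * (\<Prod>v\<in>e. \<tau> v)) + (\<Sum>e\<in>E. J e * (\<Prod>v\<in>e. \<tau> v * \<sigma> v))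
      = (\<Sum>e\<in>E. if e \<in> same_spin_edges E \<sigma> then 2 * J e * (\<Prod>v\<in>e. \<tau> v) else 0)"
    unfolding sum.distrib[symmetric] by (rule sum.cong) (simp_all add: edge_exponent)
  also have "\<dots> = (\<Sum>e\<in>E \<inter> same_spin_edges E \<sigma>. 2 * J e * (\<Prod>v\<in>e. \<tau> v))"
    using assms(1) by (rule sum.inter_restrict[symmetric])
  also have "E \<inter> same_spin_edges E \<sigma> = same_spin_edges E \<sigma>"
    using same_spin_edges_subset by blast
  finally show ?thesis
    unfolding ising_weight_def exp_add[symmetric] by simp
qed

theorem lemmaA3:
  fixes V :: "'v set" and E :: "'v set set" and J :: "'v set \<Rightarrow> real"
  assumes "finite V"
    and "\<forall>e\<in>E. e \<subseteq> V \<and> card e = 2"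
    and "\<forall>e\<in>E. J e > 0"
  shows "\<exists>c>0. \<forall>\<sigma>\<in>spins V.
           xor_mu V E J \<sigma> = c * ising_Z V (same_spin_edges E \<sigma>) (\<lambda>e. 2 * J e)"
proof (intro exI conjI ballI)
  define Z where "Z = ising_Z V E J"
  have "Z > 0"
    unfolding Z_def using assms(1) by (rule ising_Z_pos)
  then show "1 / Z\<^sup>2 > 0"
    by simp
  have "finite E"
    using assms(1,2) by (auto intro: finite_subset[of E "Pow V"])
  fix \<sigma> assume "\<sigma> \<in> spins V"
  have "xor_mu V E J \<sigma> = (\<Sum>\<tau>\<in>spins V. ising_weight E J \<tau> * ising_weight E J (\<lambda>v. \<tau> v * \<sigma> v)) / Z\<^sup>2"
    using assms(1) \<open>\<sigma> \<in> spins V\<close>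
    by (simp add: xor_mu_eq_sum ising_mu_def Z_def sum_divide_distrib power2_eq_square)
  also have "\<dots> = 1 / Z\<^sup>2 * ising_Z V (same_spin_edges E \<sigma>) (\<lambda>e. 2 * J e)"
    using \<open>finite E\<close> assms(2) \<open>\<sigma> \<in> spins V\<close>
    by (simp add: ising_Z_def ising_weight_mult_flip)
  finally show "xor_mu V E J \<sigma> = 1 / Z\<^sup>2 * ising_Z V (same_spin_edges E \<sigma>) (\<lambda>e. 2 * J e)" .
qed

end
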